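(* Let $n\ge1$ and let the zeros $z_1(x),\ldots,z_n(x)$ of $\psi_n(x,z)=\Gamma(1-z)P^z_n(\tanh x)$ with respect to $z$ be labeled so that they are ordered from large to small near $x=0$ and depend twice differentiably on $x$ with $z_j(x)\ne z_k(x)$ for $j\ne k$. Then $$z_\ell''(x)+2z_\ell(x)z_\ell'(x)=\sum_{j=1,\,j\neq\ell}^n\frac{2z_\ell'(x)z_j'(x)}{z_\ell(x)-z_j(x)},\qquad \ell=1,\ldots,n,$$ with initial conditions $z_\ell(0)=n+1-2\ell$ and $$z_\ell'(0)=\frac{-\prod_{j=1,\,j\neq|n+1-2\ell|}^n\bigl((n+1-2\ell)^2-j^2\bigr)}{2^{n-1}\prod_{j=1,\,j\neq\ell,\,n+1-\ell}^n 2(\ell-j)^2},\qquad \ell=1,\ldots,n.$$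
   Context: Fix an integer $n\ge1$. For $x\in\mathbb{R}$ and $z\in\mathbb{C}\setminus\{1,\ldots,n\}$ define $$\psi_n(x,z)=\frac{e^{zx}}{(1+e^{-2x})^n}\sum_{m=0}^n e^{-2mx}\binom{n}{m}\prod_{j=1}^m\frac{z+n+1-j}{z-j},$$ which equals $\Gamma(1-z)P_n^z(\tanh x)$, where $P_n^z$ is the associated Legendre function of degree $n$ and order $z$ and $\Gamma$ is the Euler gamma function. For each $x$, the polynomial $Q_x(z)=\sum_{m=0}^n e^{-2mx}\binom{n}{m}\prod_{j=1}^m(z+n+1-j)\prod_{k=m+1}^n(z-k)$ has degree $n$ with leading coefficient $(1+e^{-2x})^n$; its roots (with multiplicity) are denoted $z_1(x),\ldots,z_n(x)$, so that $\psi_n(x,z)=\frac{e^{zx}}{(1+e^{-2x})^n}\prod_{j=1}^n\frac{z-z_j(x)}{z-j}$. These are called the zeros of $\psi_n(x,\cdot)$. *)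

theory Defs
  imports "HOL-Analysis.Analysis"
begin

text \<open>The polynomial Q_x(z) whose roots are the zeros of psi_n(x, .).\<close>
definition Qpoly :: "nat \<Rightarrow> real \<Rightarrow> complex \<Rightarrow> complex" where
  "Qpoly n x z = (\<Sum>m=0..n. complex_of_real (exp (-2 * real m * x)) * of_nat (n choose m)
      * (\<Prod>j=1..m. z + of_nat n + 1 - of_nat j) * (\<Prod>k=m+1..n. z - of_nat k))"

text \<open>psi_n(x,z) as in the paper (for z not in {1..n}).\<close>
definition psi :: "nat \<Rightarrow> real \<Rightarrow> complex \<Rightarrow> complex" where
  "psi n x z = exp (z * complex_of_real x) / complex_of_real ((1 + exp (-2*x)) ^ n)
      * (\<Sum>m=0..n. complex_of_real (exp (-2 * real m * x)) * of_nat (n choose m)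
          * (\<Prod>j=1..m. (z + of_nat n + 1 - of_nat j) / (z - of_nat j)))"

definition slope_num :: "nat \<Rightarrow> nat \<Rightarrow> int" where
  "slope_num n l = (let c = int n + 1 - 2 * int l in
     - (\<Prod>j\<in>{1..n} - {nat \<bar>c\<bar>}. c^2 - (int j)^2))"

definition slope_den :: "nat \<Rightarrow> nat \<Rightarrow> int" where
  "slope_den n l = 2^(n-1) * (\<Prod>j\<in>{1..n} - {l, n+1-l}. 2 * (int l - int j)^2)"

end

theory Submission
  imports Defs
begin

text \<open>
  Write Q(x,w) = sum_m exp(-2mx) a_m(w) for the polynomial Qpoly. The coefficients obey the
  two-term recurrence (m+1)(m+1-w) a_(m+1) + (n-m)(n-m+w) a_m = 0, which says that for fixed w
  the function x |-> Q(x,w) solves the linear equation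
  (1+u) Q_xx + 2(2nu + w(1+u)) Q_x + 4n(n+w) u Q = 0,  where u = exp(-2x).
  Differentiating the factorisation Q = (1+u)^n prod_j (w - z_j(x)) twice and evaluating at the
  root w = z_l(x), the terms coming from the derivative of (1+u)^n cancel against 4nu, and what
  is left is the equation of motion of z_l.

  At x = 0 the sum Q(0,w) = sum_m a_m(w) satisfies (w-n) Q(0,w+1) = (w+n) Q(0,w-1), so it
  vanishes at n+1-2l, and the ordering of the roots forces z_l(0) = n+1-2l. Since moreover
  Q_x(0,w) = (w-n) Q(0,w+1) - (w+n) Q(0,w), comparing with the first derivative of the
  factorisation at the root gives z_l'(0) as a quotient of integer products, which is then
  brought into the stated form.
\<close>

section \<open>The coefficients of Qpoly\<close>

definition qfactor_left :: "nat \<Rightarrow> nat \<Rightarrow> complex \<Rightarrow> complex" where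
  "qfactor_left n m w = (\<Prod>j=1..m. w + of_nat n + 1 - of_nat j)"

definition qfactor_right :: "nat \<Rightarrow> nat \<Rightarrow> complex \<Rightarrow> complex" where
  "qfactor_right n m w = (\<Prod>k=m+1..n. w - of_nat k)"

definition qcoeff :: "nat \<Rightarrow> nat \<Rightarrow> complex \<Rightarrow> complex" where
  "qcoeff n m w = of_nat (n choose m) * qfactor_left n m w * qfactor_right n m w"

lemma Qpoly_eq_sum_qcoeff:
  "Qpoly n x w = (\<Sum>m\<le>n. complex_of_real (exp (-2 * real m * x)) * qcoeff n m w)"
  by (simp add: Qpoly_def qcoeff_def qfactor_left_def qfactor_right_def mult.assoc atLeast0AtMost)

lemma qfactor_left_0 [simp]: "qfactor_left n 0 w = 1"
  by (simp add: qfactor_left_def)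

lemma qfactor_right_self [simp]: "qfactor_right n n w = 1"
  by (simp add: qfactor_right_def)

lemma qfactor_left_Suc: "qfactor_left n (Suc m) w = qfactor_left n m w * (w + of_nat n - of_nat m)"
  by (simp add: qfactor_left_def algebra_simps)

lemma qfactor_right_Suc: "m < n \<Longrightarrow> qfactor_right n m w = (w - of_nat (Suc m)) * qfactor_right n (Suc m) w"
  by (simp add: qfactor_right_def prod.atLeast_Suc_atMost)

lemma qfactor_left_shift_up: "qfactor_left n (Suc m) (w + 1) = (w + of_nat n + 1) * qfactor_left n m w"
  by (induction m) (simp_all add: qfactor_left_Suc algebra_simps)

lemma qfactor_left_shift_down: "(w + of_nat n) * qfactor_left n m (w - 1) = qfactor_left n (Suc m) w"
proof (induction m)
  case (Suc m)
  have "(w + of_nat n) * qfactor_left n (Suc m) (w - 1)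
      = (w + of_nat n) * qfactor_left n m (w - 1) * (w - 1 + of_nat n - of_nat m)"
    by (simp add: qfactor_left_Suc)
  also have "\<dots> = qfactor_left n (Suc (Suc m)) w"
    unfolding Suc.IH qfactor_left_Suc[of n "Suc m"] by (simp add: algebra_simps)
  finally show ?case .
qed (simp add: qfactor_left_Suc)

lemma qfactor_right_Suc_top:
  "m \<le> n \<Longrightarrow> qfactor_right (Suc n) m w = qfactor_right n m w * (w - of_nat (Suc n))"
  by (simp add: qfactor_right_def)

lemma qfactor_right_shift_up:
  "m \<le> n \<Longrightarrow> (w - of_nat n) * qfactor_right n m (w + 1) = (w - of_nat m) * qfactor_right n m w"
proof (induction n)
  case (Suc n)
  show ?case
  proof (cases "m = Suc n")
    case False
    with Suc have "(w - of_nat n) * qfactor_right n m (w + 1) = (w - of_nat m) * qfactor_right n m w"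
      by simp
    with False Suc.prems show ?thesis
      by (simp add: qfactor_right_Suc_top ac_simps)
  qed simp
qed simp

lemma qfactor_right_shift_down:
  "m < n \<Longrightarrow> qfactor_right n m (w - 1) = (w - of_nat n - 1) * qfactor_right n (Suc m) w"
proof (induction n)
  case (Suc n)
  show ?case
  proof (cases "m = n")
    case False
    with Suc have "qfactor_right n m (w - 1) = (w - of_nat n - 1) * qfactor_right n (Suc m) w"
      by simp
    with False Suc.prems show ?thesis
      by (simp add: qfactor_right_Suc_top)
  qed (simp add: qfactor_right_def)
qed simp

lemma of_nat_Suc_times_choose_Suc:
  assumes "m \<le> n"
  shows "of_nat (Suc m) * of_nat (n choose Suc m)
       = (of_nat n - of_nat m) * (of_nat (n choose m) :: 'a::comm_ring_1)"
proof -
  have "Suc m * (n choose Suc m) = (n - m) * (n choose m)"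
    using binomial_absorption[of m n] binomial_absorb_comp[of n m] by simp
  then show ?thesis
    using assms by (metis of_nat_diff of_nat_mult)
qed

lemma qcoeff_recurrence:
  assumes "m < n"
  shows "of_nat (Suc m) * (of_nat (Suc m) - w) * qcoeff n (Suc m) w
       + (of_nat n - of_nat m) * (of_nat n - of_nat m + w) * qcoeff n m w = 0"
  using of_nat_Suc_times_choose_Suc[OF less_imp_le[OF assms], where 'a=complex]
  unfolding qcoeff_def qfactor_left_Suc qfactor_right_Suc[OF assms] by algebra

lemma qcoeff_shift_up:
  assumes "m < n"
  shows "(w - of_nat n) * qcoeff n (Suc m) (w + 1)
       = (w - of_nat (Suc m)) * qcoeff n (Suc m) w + (of_nat n - of_nat m) * qcoeff n m w"
proof -
  note of_nat_Suc_times_choose_Suc[OF less_imp_le[OF assms], where 'a=complex]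
  moreover have "(w - of_nat n) * qfactor_right n (Suc m) (w + 1)
      = (w - of_nat (Suc m)) * qfactor_right n (Suc m) w"
    using qfactor_right_shift_up[of "Suc m" n w] assms by simp
  ultimately show ?thesis
    unfolding qcoeff_def qfactor_left_shift_up
    unfolding qfactor_left_Suc qfactor_right_Suc[OF assms] of_nat_Suc
    by algebra
qed

lemma qcoeff_0_shift_up: "(w - of_nat n) * qcoeff n 0 (w + 1) = w * qcoeff n 0 w"
  using qfactor_right_shift_up[of 0 n w] by (simp add: qcoeff_def)

lemma qcoeff_shift_down:
  assumes "m < n"
  shows "(w + of_nat n) * qcoeff n m (w - 1)
       = (w + of_nat n - of_nat m) * qcoeff n m w - of_nat (Suc m) * qcoeff n (Suc m) w"
proof -
  note of_nat_Suc_times_choose_Suc[OF less_imp_le[OF assms], where 'a=complex]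
  moreover have "(w + of_nat n) * qfactor_left n m (w - 1) = qfactor_left n m w * (w + of_nat n - of_nat m)"
    using qfactor_left_shift_down[of w n m] by (simp add: qfactor_left_Suc)
  ultimately show ?thesis
    unfolding qcoeff_def qfactor_right_shift_down[OF assms]
    unfolding qfactor_left_Suc qfactor_right_Suc[OF assms] of_nat_Suc
    by algebra
qed

lemma qcoeff_top_shift_down: "(w + of_nat n) * qcoeff n n (w - 1) = w * qcoeff n n w"
  using qfactor_left_shift_down[of w n n] by (simp add: qcoeff_def qfactor_left_Suc)

lemma Qpoly_0: "Qpoly n 0 w = (\<Sum>m\<le>n. qcoeff n m w)"
  by (simp add: Qpoly_eq_sum_qcoeff)

lemma Qpoly_0_shift_up:
  "(w - of_nat n) * Qpoly n 0 (w + 1) = (\<Sum>m\<le>n. (w + of_nat n - 2 * of_nat m) * qcoeff n m w)"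
proof -
  have "(w - of_nat n) * Qpoly n 0 (w + 1)
      = (w - of_nat n) * qcoeff n 0 (w + 1) + (\<Sum>m<n. (w - of_nat n) * qcoeff n (Suc m) (w + 1))"
    by (simp add: Qpoly_0 sum.atMost_shift distrib_left sum_distrib_left)
  also have "\<dots> = w * qcoeff n 0 w
      + (\<Sum>m<n. (w - of_nat (Suc m)) * qcoeff n (Suc m) w + (of_nat n - of_nat m) * qcoeff n m w)"
    by (simp add: qcoeff_0_shift_up qcoeff_shift_up del: of_nat_Suc)
  also have "\<dots> = (\<Sum>m\<le>n. (w - of_nat m) * qcoeff n m w) + (\<Sum>m\<le>n. (of_nat n - of_nat m) * qcoeff n m w)"
  proof -
    have "(\<Sum>m\<le>n. (w - of_nat m) * qcoeff n m w)
        = w * qcoeff n 0 w + (\<Sum>m<n. (w - of_nat (Suc m)) * qcoeff n (Suc m) w)"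
      by (simp add: sum.atMost_shift del: of_nat_Suc)
    moreover have "(\<Sum>m\<le>n. (of_nat n - of_nat m) * qcoeff n m w) = (\<Sum>m<n. (of_nat n - of_nat m) * qcoeff n m w)"
      by (simp add: lessThan_Suc_atMost[symmetric])
    ultimately show ?thesis
      by (simp add: sum.distrib)
  qed
  also have "\<dots> = (\<Sum>m\<le>n. (w + of_nat n - 2 * of_nat m) * qcoeff n m w)"
    by (simp add: sum.distrib[symmetric] algebra_simps)
  finally show ?thesis .
qed

lemma Qpoly_0_shift_down:
  "(w + of_nat n) * Qpoly n 0 (w - 1) = (\<Sum>m\<le>n. (w + of_nat n - 2 * of_nat m) * qcoeff n m w)"
proof -
  have "(w + of_nat n) * Qpoly n 0 (w - 1)
      = (\<Sum>m<n. (w + of_nat n) * qcoeff n m (w - 1)) + (w + of_nat n) * qcoeff n n (w - 1)"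
    by (simp add: Qpoly_0 lessThan_Suc_atMost[symmetric] distrib_left sum_distrib_left)
  also have "\<dots> = (\<Sum>m<n. (w + of_nat n - of_nat m) * qcoeff n m w - of_nat (Suc m) * qcoeff n (Suc m) w)
      + w * qcoeff n n w"
    by (simp add: qcoeff_top_shift_down qcoeff_shift_down del: of_nat_Suc)
  also have "\<dots> = (\<Sum>m\<le>n. (w + of_nat n - of_nat m) * qcoeff n m w) - (\<Sum>m\<le>n. of_nat m * qcoeff n m w)"
  proof -
    have "(\<Sum>m\<le>n. (w + of_nat n - of_nat m) * qcoeff n m w)
        = (\<Sum>m<n. (w + of_nat n - of_nat m) * qcoeff n m w) + w * qcoeff n n w"
      by (simp add: lessThan_Suc_atMost[symmetric])
    moreover have "(\<Sum>m\<le>n. of_nat m * qcoeff n m w) = (\<Sum>m<n. of_nat (Suc m) * qcoeff n (Suc m) w)"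
      by (simp add: sum.atMost_shift del: of_nat_Suc)
    ultimately show ?thesis
      by (simp add: sum_subtractf)
  qed
  also have "\<dots> = (\<Sum>m\<le>n. (w + of_nat n - 2 * of_nat m) * qcoeff n m w)"
    by (simp add: sum_subtractf[symmetric] algebra_simps)
  finally show ?thesis .
qed

lemma Qpoly_0_recurrence: "(w - of_nat n) * Qpoly n 0 (w + 1) = (w + of_nat n) * Qpoly n 0 (w - 1)"
  unfolding Qpoly_0_shift_up Qpoly_0_shift_down ..

lemma Qpoly_0_vanishes:
  assumes "l \<in> {1..n}"
  shows "Qpoly n 0 (of_int (int n + 1 - 2 * int l)) = 0"
proof -
  have "Qpoly n 0 (2 * of_nat k + 1 - of_nat n) = 0" if "k < n" for k
    using that
  proof (induction k)
    case 0
    then show ?case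
      using Qpoly_0_recurrence[of "- of_nat n" n] by (simp add: algebra_simps)
  next
    case (Suc k)
    define w :: complex where "w = 2 * of_nat k + 2 - of_nat n"
    have "w - of_nat n \<noteq> 0"
    proof
      assume "w - of_nat n = 0"
      then have "of_nat (2 * Suc k) = (of_nat (2 * n) :: complex)"
        by (simp add: w_def algebra_simps)
      with Suc.prems show False
        by (simp only: of_nat_eq_iff) simp
    qed
    moreover have "Qpoly n 0 (w - 1) = 0"
      using Suc by (simp add: w_def algebra_simps)
    ultimately have "Qpoly n 0 (w + 1) = 0"
      using Qpoly_0_recurrence[of w n] by simp
    then show ?case
      by (simp add: w_def algebra_simps)
  qed
  from this[of "n - l"] assms show ?thesis
    by (simp add: of_nat_diff algebra_simps)
qed

section \<open>A second-order equation in x\<close>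

definition Qpoly_dx :: "nat \<Rightarrow> real \<Rightarrow> complex \<Rightarrow> complex" where
  "Qpoly_dx n x w = (\<Sum>m\<le>n. complex_of_real (-2 * real m * exp (-2 * real m * x)) * qcoeff n m w)"

definition Qpoly_dxx :: "nat \<Rightarrow> real \<Rightarrow> complex \<Rightarrow> complex" where
  "Qpoly_dxx n x w = (\<Sum>m\<le>n. complex_of_real (4 * (real m)\<^sup>2 * exp (-2 * real m * x)) * qcoeff n m w)"

lemma has_vector_derivative_Qpoly: "((\<lambda>x. Qpoly n x w) has_vector_derivative Qpoly_dx n x w) (at x)"
  unfolding Qpoly_eq_sum_qcoeff Qpoly_dx_def
  by (intro has_vector_derivative_sum has_vector_derivative_mult_left has_vector_derivative_of_real)
     (auto intro!: derivative_eq_intros)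

lemma has_vector_derivative_Qpoly_dx: "((\<lambda>x. Qpoly_dx n x w) has_vector_derivative Qpoly_dxx n x w) (at x)"
  unfolding Qpoly_dx_def Qpoly_dxx_def
  by (intro has_vector_derivative_sum has_vector_derivative_mult_left has_vector_derivative_of_real)
     (auto intro!: derivative_eq_intros simp: power2_eq_square)

lemma Qpoly_dx_0: "Qpoly_dx n 0 w = (w - of_nat n) * Qpoly n 0 (w + 1) - (w + of_nat n) * Qpoly n 0 w"
  unfolding Qpoly_0_shift_up
  unfolding Qpoly_0 Qpoly_dx_def sum_distrib_left sum_subtractf[symmetric]
  by (rule sum.cong) (simp_all add: algebra_simps)

lemma sum_qcoeff_recurrence:
  "(\<Sum>m\<le>n. (of_nat m * (of_nat m - w) * u ^ m
      + (of_nat n - of_nat m) * (of_nat n - of_nat m + w) * u ^ Suc m) * qcoeff n m w) = 0"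
    (is "(\<Sum>m\<le>n. (?a m + ?b m) * _) = 0")
proof -
  have shift_a: "(\<Sum>m\<le>n. ?a m * qcoeff n m w) = (\<Sum>m<n. ?a (Suc m) * qcoeff n (Suc m) w)"
    by (simp add: sum.atMost_shift del: of_nat_Suc)
  have drop_b: "(\<Sum>m\<le>n. ?b m * qcoeff n m w) = (\<Sum>m<n. ?b m * qcoeff n m w)"
    by (simp add: lessThan_Suc_atMost[symmetric])
  have "(\<Sum>m\<le>n. (?a m + ?b m) * qcoeff n m w)
      = (\<Sum>m\<le>n. ?a m * qcoeff n m w) + (\<Sum>m\<le>n. ?b m * qcoeff n m w)"
    by (simp add: distrib_right sum.distrib)
  also have "\<dots> = (\<Sum>m<n. ?a (Suc m) * qcoeff n (Suc m) w) + (\<Sum>m<n. ?b m * qcoeff n m w)"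
    unfolding shift_a drop_b ..
  also have "\<dots> = (\<Sum>m<n. u ^ Suc m * (of_nat (Suc m) * (of_nat (Suc m) - w) * qcoeff n (Suc m) w
      + (of_nat n - of_nat m) * (of_nat n - of_nat m + w) * qcoeff n m w))"
    by (simp add: sum.distrib[symmetric] algebra_simps del: of_nat_Suc)
  also have "\<dots> = 0"
    by (rule sum.neutral) (simp add: qcoeff_recurrence del: of_nat_Suc)
  finally show ?thesis .
qed

lemma Qpoly_x_ode:
  fixes x :: real
  defines "u \<equiv> complex_of_real (exp (-2 * x))"
  shows "(1 + u) * Qpoly_dxx n x w + 2 * (2 * of_nat n * u + w * (1 + u)) * Qpoly_dx n x w
       + 4 * of_nat n * (of_nat n + w) * u * Qpoly n x w = 0"
proof -
  have exp_eq: "complex_of_real (exp (-2 * real m * x)) = u ^ m" for m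
    by (simp add: u_def flip: exp_of_nat_mult of_real_power)
  have dx_coeff: "complex_of_real (-2 * real m * exp (-2 * real m * x)) = -2 * of_nat m * u ^ m" for m
    by (simp add: exp_eq[symmetric])
  have dxx_coeff: "complex_of_real (4 * (real m)\<^sup>2 * exp (-2 * real m * x)) = 4 * (of_nat m)\<^sup>2 * u ^ m" for m
    by (simp add: exp_eq[symmetric])
  have "(1 + u) * Qpoly_dxx n x w + 2 * (2 * of_nat n * u + w * (1 + u)) * Qpoly_dx n x w
      + 4 * of_nat n * (of_nat n + w) * u * Qpoly n x w
      = 4 * (\<Sum>m\<le>n. (of_nat m * (of_nat m - w) * u ^ m
          + (of_nat n - of_nat m) * (of_nat n - of_nat m + w) * u ^ Suc m) * qcoeff n m w)"
    unfolding Qpoly_dx_def Qpoly_dxx_def Qpoly_eq_sum_qcoeff sum_distrib_left sum.distrib[symmetric]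
    by (rule sum.cong[OF refl], unfold exp_eq dx_coeff dxx_coeff power_Suc) algebra
  also have "\<dots> = 0"
    by (simp only: sum_qcoeff_recurrence mult_zero_right)
  finally show ?thesis .
qed

section \<open>Derivatives of a product of moving root factors\<close>

lemma has_vector_derivative_prod:
  fixes f :: "'i \<Rightarrow> real \<Rightarrow> 'a::real_normed_field"
  assumes "\<And>i. i \<in> S \<Longrightarrow> (f i has_vector_derivative f' i) (at x within T)"
  shows "((\<lambda>x. \<Prod>i\<in>S. f i x) has_vector_derivative (\<Sum>i\<in>S. f' i * (\<Prod>j\<in>S - {i}. f j x)))
           (at x within T)"
proof -
  have "((\<lambda>x. \<Prod>i\<in>S. f i x) has_derivative
      (\<lambda>y. \<Sum>i\<in>S. (y *\<^sub>R f' i) * (\<Prod>j\<in>S - {i}. f j x))) (at x within T)"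
    using assms unfolding has_vector_derivative_def by (intro has_derivative_prod) auto
  then show ?thesis
    unfolding has_vector_derivative_def by (simp add: scaleR_sum_right)
qed

lemma differentiable_prod:
  fixes f :: "'i \<Rightarrow> 'b::real_normed_vector \<Rightarrow> 'a::real_normed_field"
  assumes "\<And>i. i \<in> S \<Longrightarrow> f i differentiable (at x within T)"
  shows "(\<lambda>x. \<Prod>i\<in>S. f i x) differentiable (at x within T)"
proof -
  from assms obtain f' where "\<And>i. i \<in> S \<Longrightarrow> (f i has_derivative f' i) (at x within T)"
    unfolding differentiable_def by metis
  then show ?thesis
    unfolding differentiable_def by (blast intro: has_derivative_prod)
qed

lemma sum_times_prod_remove:
  fixes f g :: "'i \<Rightarrow> 'a::field"
  assumes "finite J" "\<And>j. j \<in> J \<Longrightarrow> f j \<noteq> 0"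
  shows "(\<Sum>j\<in>J. g j * (\<Prod>k\<in>J - {j}. f k)) = (\<Prod>k\<in>J. f k) * (\<Sum>j\<in>J. g j / f j)"
  unfolding sum_distrib_left
proof (rule sum.cong)
  fix j assume "j \<in> J"
  with assms show "g j * (\<Prod>k\<in>J - {j}. f k) = (\<Prod>k\<in>J. f k) * (g j / f j)"
    by (simp add: prod.remove field_simps)
qed simp

lemma has_vector_derivative_mult_derivative_at_zero:
  fixes h r :: "real \<Rightarrow> 'a::real_normed_field"
  assumes "open I" "x0 \<in> I" "h x0 = 0"
    and h: "\<And>x. x \<in> I \<Longrightarrow> (h has_vector_derivative h' x) (at x)"
    and h': "(h' has_vector_derivative h'') (at x0)"
    and r: "\<And>x. x \<in> I \<Longrightarrow> (r has_vector_derivative r' x) (at x)"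
    and r': "r' differentiable at x0"
  shows "((\<lambda>x. h x * r' x + h' x * r x) has_vector_derivative h'' * r x0 + 2 * h' x0 * r' x0) (at x0)"
proof -
  obtain r'' where "(r' has_vector_derivative r'') (at x0)"
    using r' vector_derivative_works by blast
  then have "((\<lambda>x. h x * r' x + h' x * r x) has_vector_derivative
      h x0 * r'' + h' x0 * r' x0 + (h' x0 * r' x0 + h'' * r x0)) (at x0)"
    using assms(2) by (intro has_vector_derivative_add has_vector_derivative_mult h h' r)
  with \<open>h x0 = 0\<close> show ?thesis
    by (simp add: algebra_simps)
qed

lemma prod_roots_derivatives_at_root:
  fixes z z' z'' :: "'i \<Rightarrow> real \<Rightarrow> 'a::real_normed_field"
  assumes "finite S" "l \<in> S" "open I" "x0 \<in> I"
    and d1: "\<And>j x. j \<in> S \<Longrightarrow> x \<in> I \<Longrightarrow> (z j has_vector_derivative z' j x) (at x)"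
    and d2: "\<And>j. j \<in> S \<Longrightarrow> (z' j has_vector_derivative z'' j x0) (at x0)"
    and distinct: "\<And>j. j \<in> S \<Longrightarrow> j \<noteq> l \<Longrightarrow> z j x0 \<noteq> z l x0"
  defines "w \<equiv> z l x0" and "R \<equiv> \<Prod>k\<in>S - {l}. z l x0 - z k x0"
  obtains p' where
    "\<And>x. x \<in> I \<Longrightarrow> ((\<lambda>x. \<Prod>j\<in>S. w - z j x) has_vector_derivative p' x) (at x)"
    "p' x0 = - z' l x0 * R"
    "(p' has_vector_derivative
        - R * (z'' l x0 - (\<Sum>j\<in>S - {l}. 2 * z' l x0 * z' j x0 / (w - z j x0)))) (at x0)"
proof -
  define J where "J = S - {l}"
  define rest where "rest x = (\<Prod>k\<in>J. w - z k x)" for x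
  define rest' where "rest' x = (\<Sum>j\<in>J. - z' j x * (\<Prod>k\<in>J - {j}. w - z k x))" for x
  define p' where "p' x = (w - z l x) * rest' x + - z' l x * rest x" for x
  have J: "finite J" "J \<subseteq> S" "l \<notin> J"
    using assms(1) by (auto simp: J_def)
  have factor: "((\<lambda>x. w - z j x) has_vector_derivative - z' j x) (at x)" if "j \<in> S" "x \<in> I" for j x
    using has_vector_derivative_diff[OF has_vector_derivative_const d1[OF that]] by simp
  have rest: "(rest has_vector_derivative rest' x) (at x)" if "x \<in> I" for x
    unfolding rest_def rest'_def using J that by (intro has_vector_derivative_prod factor) auto
  have "rest' differentiable at x0"
    unfolding rest'_def using J assms(2,4)
    by (intro differentiable_sum ballI differentiable_mult differentiable_minus differentiable_prod
        differentiable_diff differentiableI_vector[OF d1] differentiableI_vector[OF d2]) auto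
  then have "(p' has_vector_derivative - z'' l x0 * rest x0 + 2 * - z' l x0 * rest' x0) (at x0)"
    unfolding p'_def using assms(2-4)
    by (intro has_vector_derivative_mult_derivative_at_zero factor rest has_vector_derivative_minus d2)
       (auto simp: w_def)
  moreover have "rest x0 = R"
    by (simp add: R_def rest_def J_def w_def)
  moreover have "rest' x0 = R * (\<Sum>j\<in>J. - z' j x0 / (w - z j x0))"
  proof -
    have "w - z j x0 \<noteq> 0" if "j \<in> J" for j
      using distinct[of j] that by (auto simp: J_def w_def)
    then show ?thesis
      unfolding rest'_def using J by (subst sum_times_prod_remove) (auto simp: R_def J_def w_def)
  qed
  moreover have "(\<Sum>j\<in>J. 2 * z' l x0 * z' j x0 / (w - z j x0))
      = - 2 * z' l x0 * (\<Sum>j\<in>J. - z' j x0 / (w - z j x0))"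
    by (simp add: sum_distrib_left sum_negf[symmetric])
  ultimately have "(p' has_vector_derivative
      - R * (z'' l x0 - (\<Sum>j\<in>J. 2 * z' l x0 * z' j x0 / (w - z j x0)))) (at x0)"
    by (simp add: algebra_simps)
  moreover have "((\<lambda>x. \<Prod>j\<in>S. w - z j x) has_vector_derivative p' x) (at x)" if "x \<in> I" for x
  proof -
    have "(\<lambda>x. \<Prod>j\<in>S. w - z j x) = (\<lambda>x. (w - z l x) * rest x)"
      using assms(1,2) by (simp add: rest_def J_def prod.remove)
    then show ?thesis
      unfolding p'_def using has_vector_derivative_mult[OF factor[OF assms(2) that] rest[OF that]] by simp
  qed
  moreover have "p' x0 = - z' l x0 * R"
    by (simp add: p'_def w_def \<open>rest x0 = R\<close>)
  ultimately show ?thesis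
    using that unfolding J_def by blast
qed

section \<open>Integer product identities for the initial slopes\<close>

lemma prod_shift_to_int_interval:
  assumes "1 \<le> l"
  shows "(\<Prod>k\<in>{1..n} - {k. int k - int l \<in> X}. g (int k - int l))
       = (\<Prod>i\<in>{1 - int l..int n - int l} - X. (g i :: int))"
  by (rule prod.reindex_bij_witness[where i="\<lambda>i. nat (i + int l)" and j="\<lambda>k. int k - int l"])
     (use assms in auto)

lemma prod_square_diffs_nonneg:
  fixes d :: int
  assumes d0: "0 \<le> d" and dn: "d < int n"
  shows "(\<Prod>j\<in>{1..n} - {nat d}. d\<^sup>2 - (int j)\<^sup>2) * (if d = 0 then 1 else 2 * d\<^sup>2)
       = (\<Prod>i\<in>{d - int n..d + int n} - {0}. i)"
proof -
  have Pm: "(\<Prod>j\<in>{1..n} - {nat d}. d - int j) = (\<Prod>i\<in>{d - int n..d - 1} - {0}. i)"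
    by (rule prod.reindex_bij_witness[where i="\<lambda>i. nat (d - i)" and j="\<lambda>j. d - int j"])
       (use d0 in auto)
  have Pp: "(\<Prod>j\<in>{1..n} - {nat d}. d + int j) = (\<Prod>i\<in>{d + 1..d + int n} - {2 * d}. i)"
    by (rule prod.reindex_bij_witness[where i="\<lambda>i. nat (i - d)" and j="\<lambda>j. d + int j"])
       (use d0 in auto)
  have sq: "(\<Prod>j\<in>{1..n} - {nat d}. d\<^sup>2 - (int j)\<^sup>2)
      = (\<Prod>j\<in>{1..n} - {nat d}. d - int j) * (\<Prod>j\<in>{1..n} - {nat d}. d + int j)"
    unfolding prod.distrib[symmetric] by (rule prod.cong) (simp_all add: power2_eq_square algebra_simps)
  have disj: "({d - int n..d - 1} - {0}) \<inter> ({d + 1..d + int n} - {2 * d}) = {}" by auto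
  show ?thesis
  proof (cases "d = 0")
    case True
    have "{d - int n..d + int n} - {0} = ({d - int n..d - 1} - {0}) \<union> ({d + 1..d + int n} - {2 * d})"
      using True by auto
    then show ?thesis using True sq Pm Pp disj by (simp add: prod.union_disjoint)
  next
    case False
    have "{d - int n..d + int n} - {0}
        = insert d (insert (2 * d) (({d - int n..d - 1} - {0}) \<union> ({d + 1..d + int n} - {2 * d})))"
      using False d0 dn by auto
    then have "(\<Prod>i\<in>{d - int n..d + int n} - {0}. i)
        = d * (2 * d) * ((\<Prod>i\<in>{d - int n..d - 1} - {0}. i) * (\<Prod>i\<in>{d + 1..d + int n} - {2 * d}. i))"
      using False d0 disj by (simp add: prod.union_disjoint)
    then show ?thesis using False sq Pm Pp by (simp add: power2_eq_square algebra_simps)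
  qed
qed

text \<open>
  The factors c - j and c + j (j = 1..n) run through [c-n, c+n] - {c}; omitting j = |c| also
  drops 0 and 2c, so multiplying by c * 2c gives the product of all nonzero integers in [c-n, c+n].
\<close>

lemma prod_square_diffs:
  fixes c :: int
  assumes cn: "\<bar>c\<bar> < int n"
  shows "(\<Prod>j\<in>{1..n} - {nat \<bar>c\<bar>}. c\<^sup>2 - (int j)\<^sup>2) * (if c = 0 then 1 else 2 * c\<^sup>2)
       = (\<Prod>i\<in>{c - int n..c + int n} - {0}. i)"
proof (cases "c \<ge> 0")
  case True
  then show ?thesis using prod_square_diffs_nonneg[of c n] cn by simp
next
  case False
  have e: "(\<Prod>j\<in>{1..n} - {nat \<bar>c\<bar>}. c\<^sup>2 - (int j)\<^sup>2) * (if c = 0 then 1 else 2 * c\<^sup>2)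
      = (\<Prod>i\<in>{-c - int n..-c + int n} - {0}. i)"
    using prod_square_diffs_nonneg[of "-c" n] cn False by simp
  have "(\<Prod>i\<in>{-c - int n..-c + int n} - {0}. i) = (\<Prod>i\<in>{c - int n..c + int n} - {0}. - i)"
    by (rule prod.reindex_bij_witness[where i="\<lambda>i. - i" and j="\<lambda>i. - i"]) auto
  also have "\<dots> = (\<Prod>i\<in>{c - int n..c + int n} - {0}. i)"
  proof -
    have z: "0 \<in> {c - int n..c + int n}" using cn by auto
    have "card {c - int n..c + int n} = 2 * n + 1" by simp
    then have "card ({c - int n..c + int n} - {0}) = 2 * n"
      using z by (simp add: card_Diff_singleton)
    then show ?thesis by (simp add: prod_uminus)
  qed
  finally show ?thesis using e by simp
qed

lemma prod_int_interval_split_parity: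
  fixes a b :: int
  assumes a: "a \<le> 0" and b: "0 \<le> b"
  shows "(\<Prod>i\<in>{2 * a - 1..2 * b + 1} - {0}. i)
       = (2 * a - 1) * (\<Prod>i\<in>{a..b}. 2 * i + 1) * 2 ^ nat (b - a) * (\<Prod>i\<in>{a..b} - {0}. i)"
proof -
  have seteq: "{2 * a - 1..2 * b + 1} - {0} = (\<lambda>i. 2 * i + 1) ` {a - 1..b} \<union> (\<lambda>i. 2 * i) ` ({a..b} - {0})"
  proof
    show "{2 * a - 1..2 * b + 1} - {0} \<subseteq> (\<lambda>i. 2 * i + 1) ` {a - 1..b} \<union> (\<lambda>i. 2 * i) ` ({a..b} - {0})"
    proof
      fix x assume x: "x \<in> {2 * a - 1..2 * b + 1} - {0}"
      show "x \<in> (\<lambda>i. 2 * i + 1) ` {a - 1..b} \<union> (\<lambda>i. 2 * i) ` ({a..b} - {0})"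
      proof (cases "even x")
        case True
        then obtain k where k: "x = 2 * k" by (rule evenE)
        then have "k \<in> {a..b} - {0}" using x by auto
        then show ?thesis using k by blast
      next
        case False
        then obtain k where k: "x = 2 * k + 1" by (rule oddE)
        then have "k \<in> {a - 1..b}" using x by auto
        then show ?thesis using k by blast
      qed
    qed
  next
    show "(\<lambda>i. 2 * i + 1) ` {a - 1..b} \<union> (\<lambda>i. 2 * i) ` ({a..b} - {0}) \<subseteq> {2 * a - 1..2 * b + 1} - {0}"
      by (auto; presburger)
  qed
  have disj: "(\<lambda>i. 2 * i + 1) ` {a - 1..b} \<inter> (\<lambda>i. 2 * i) ` ({a..b} - {0}) = {}"
    by (auto; presburger)
  have inj1: "inj_on (\<lambda>i::int. 2 * i + 1) {a - 1..b}" by (auto simp: inj_on_def)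
  have inj2: "inj_on (\<lambda>i::int. 2 * i) ({a..b} - {0})" by (auto simp: inj_on_def)
  have p1: "(\<Prod>i\<in>{a - 1..b}. 2 * i + 1) = (2 * a - 1) * (\<Prod>i\<in>{a..b}. 2 * i + 1)"
  proof -
    have "{a - 1..b} = insert (a - 1) {a..b}" using a b by auto
    then show ?thesis by (simp add: algebra_simps)
  qed
  have p2: "(\<Prod>i\<in>{a..b} - {0}. 2 * i) = 2 ^ nat (b - a) * (\<Prod>i\<in>{a..b} - {0}. i)"
  proof -
    have "card ({a..b} - {0}) = nat (b - a)" using a b by (simp add: card_Diff_singleton_if)
    then show ?thesis by (simp add: prod.distrib)
  qed
  show ?thesis
    unfolding seteq using disj inj1 inj2 p1 p2
    by (simp add: prod.union_disjoint prod.reindex)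
qed

lemma slope_den_times:
  assumes l: "l \<in> {1..n}"
  defines "c \<equiv> int n + 1 - 2 * int l"
  shows "slope_den n l * (if c = 0 then 1 else 2 * c\<^sup>2)
       = 2 ^ (n - 1) * 2 ^ (n - 1) * (\<Prod>i\<in>{1 - int l..int n - int l} - {0}. i)\<^sup>2"
proof -
  define A where "A = {1 - int l..int n - int l}"
  have card_A: "card (A - {0}) = n - 1"
    using l by (simp add: A_def card_Diff_singleton_if)
  have "(\<Prod>j\<in>{1..n} - {l, n + 1 - l}. 2 * (int l - int j)\<^sup>2)
      = (\<Prod>j\<in>{1..n} - {k. int k - int l \<in> {0, c}}. 2 * (int j - int l)\<^sup>2)"
    by (intro prod.cong) (use l in \<open>auto simp: c_def power2_commute\<close>)
  also have "\<dots> = (\<Prod>i\<in>A - {0, c}. 2 * i\<^sup>2)"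
    using prod_shift_to_int_interval[where n=n and X="{0, c}" and g="\<lambda>i. 2 * i\<^sup>2"] l
    by (simp add: A_def)
  finally have "(\<Prod>j\<in>{1..n} - {l, n + 1 - l}. 2 * (int l - int j)\<^sup>2) = (\<Prod>i\<in>A - {0, c}. 2 * i\<^sup>2)" .
  moreover have "(\<Prod>i\<in>A - {0, c}. 2 * i\<^sup>2) * (if c = 0 then 1 else 2 * c\<^sup>2) = (\<Prod>i\<in>A - {0}. 2 * i\<^sup>2)"
  proof (cases "c = 0")
    case False
    then have "A - {0} = insert c (A - {0, c})"
      using l by (auto simp: A_def c_def)
    moreover have "finite A"
      by (simp add: A_def)
    ultimately show ?thesis
      using False by (simp add: algebra_simps)
  qed simp
  moreover have "(\<Prod>i\<in>A - {0}. 2 * i\<^sup>2) = 2 ^ (n - 1) * (\<Prod>i\<in>A - {0}. i)\<^sup>2"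
    using card_A by (simp add: prod.distrib prod_power_distrib)
  ultimately show ?thesis
    by (simp add: slope_den_def A_def mult.assoc)
qed

lemma slope_num_times:
  assumes l: "l \<in> {1..n}"
  defines "c \<equiv> int n + 1 - 2 * int l"
  shows "slope_num n l * (if c = 0 then 1 else 2 * c\<^sup>2)
       = (2 * int l - 1) * (\<Prod>i\<in>{1 - int l..int n - int l}. 2 * i + 1)
           * 2 ^ (n - 1) * (\<Prod>i\<in>{1 - int l..int n - int l} - {0}. i)"
proof -
  have "\<bar>c\<bar> < int n"
    using l by (auto simp: c_def)
  from prod_square_diffs[OF this]
  have "slope_num n l * (if c = 0 then 1 else 2 * c\<^sup>2)
      = - (\<Prod>i\<in>{2 * (1 - int l) - 1..2 * (int n - int l) + 1} - {0}. i)"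
    by (simp add: slope_num_def Let_def c_def algebra_simps)
  also have "\<dots> = (2 * int l - 1) * (\<Prod>i\<in>{1 - int l..int n - int l}. 2 * i + 1)
           * 2 ^ (n - 1) * (\<Prod>i\<in>{1 - int l..int n - int l} - {0}. i)"
    using prod_int_interval_split_parity[of "1 - int l" "int n - int l"] l
    by (simp add: nat_diff_distrib algebra_simps)
  finally show ?thesis .
qed

lemma slope_quotient:
  assumes l: "l \<in> {1..n}"
  shows "(of_int (slope_num n l) / of_int (slope_den n l) :: 'a::field_char_0)
       = of_int ((2 * int l - 1) * (\<Prod>k\<in>{1..n}. 2 * (int k - int l) + 1))
         / of_int (\<Prod>k\<in>{1..n} - {l}. 2 * (int k - int l))"
proof -
  define c where "c = int n + 1 - 2 * int l"
  define f where "f = (if c = 0 then 1 else 2 * c\<^sup>2)"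
  define G where "G = (\<Prod>i\<in>{1 - int l..int n - int l}. 2 * i + 1)"
  define H where "H = (\<Prod>i\<in>{1 - int l..int n - int l} - {0}. i)"
  have f_nz: "f \<noteq> 0"
    by (simp add: f_def)
  have "(\<Prod>k\<in>{1..n}. 2 * (int k - int l) + 1) = G"
    using prod_shift_to_int_interval[where n=n and X="{}" and g="\<lambda>i. 2 * i + 1"] l by (simp add: G_def)
  moreover have "(\<Prod>k\<in>{1..n} - {l}. 2 * (int k - int l)) = 2 ^ (n - 1) * H"
  proof -
    have "{1..n} - {l} = {1..n} - {k. int k - int l \<in> {0}}"
      by auto
    moreover have "card ({1 - int l..int n - int l} - {0}) = n - 1"
      using l by (simp add: card_Diff_singleton_if)
    ultimately show ?thesis
      using prod_shift_to_int_interval[where n=n and X="{0}" and g="\<lambda>i. 2 * i"] l by (simp add: H_def prod.distrib)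
  qed
  moreover have "slope_num n l * (2 ^ (n - 1) * H) = (2 * int l - 1) * G * slope_den n l"
  proof -
    have num: "slope_num n l * f = (2 * int l - 1) * G * 2 ^ (n - 1) * H"
      using slope_num_times[OF l] unfolding f_def c_def G_def H_def .
    have den: "slope_den n l * f = 2 ^ (n - 1) * 2 ^ (n - 1) * H\<^sup>2"
      using slope_den_times[OF l] unfolding f_def c_def H_def .
    have "slope_num n l * (2 ^ (n - 1) * H) * f = (2 * int l - 1) * G * 2 ^ (n - 1) * H * (2 ^ (n - 1) * H)"
      unfolding num[symmetric] by (simp only: ac_simps)
    also have "\<dots> = (2 * int l - 1) * G * (slope_den n l * f)"
      unfolding den by (simp add: power2_eq_square ac_simps)
    finally show ?thesis
      using f_nz by (simp add: ac_simps)
  qed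
  moreover have "H \<noteq> 0" "slope_den n l \<noteq> 0"
    by (auto simp: H_def slope_den_def)
  ultimately show ?thesis
    by (simp add: frac_eq_eq flip: of_int_mult)
qed

section \<open>The roots of Qpoly\<close>

lemma strict_mono_on_self_map_fixes:
  fixes \<sigma> :: "nat \<Rightarrow> nat"
  assumes mono: "strict_mono_on {1..n} \<sigma>" and maps: "\<sigma> ` {1..n} \<subseteq> {1..n}" and l: "l \<in> {1..n}"
  shows "\<sigma> l = l"
proof -
  have lower: "l \<le> \<sigma> l" if "l \<in> {1..n}" for l
    using that
  proof (induction l)
    case (Suc l)
    then show ?case
      using maps strict_mono_onD[OF mono, of l "Suc l"] by (cases "l = 0") (auto simp: image_subset_iff)
  qed simp
  have upper: "\<sigma> (n - k) \<le> n - k" if "k < n" for k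
    using that
  proof (induction k)
    case 0
    then show ?case using maps by (auto simp: image_subset_iff)
  next
    case (Suc k)
    have "\<sigma> (n - Suc k) < \<sigma> (n - k)"
      using Suc.prems by (intro strict_mono_onD[OF mono]) auto
    with Suc show ?case
      by linarith
  qed
  show ?thesis
    using lower[OF l] upper[of "n - l"] l by auto
qed

locale Qpoly_root_curves =
  fixes n :: nat and I :: "real set" and z z' z'' :: "nat \<Rightarrow> real \<Rightarrow> complex"
  assumes n_pos: "n \<ge> 1"
    and open_I: "open I"
    and roots: "\<And>x w. x \<in> I \<Longrightarrow>
        Qpoly n x w = complex_of_real ((1 + exp (-2*x)) ^ n) * (\<Prod>j=1..n. w - z j x)"
    and d1: "\<And>l x. l \<in> {1..n} \<Longrightarrow> x \<in> I \<Longrightarrow> (z l has_vector_derivative z' l x) (at x)"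
    and d2: "\<And>l x. l \<in> {1..n} \<Longrightarrow> x \<in> I \<Longrightarrow> (z' l has_vector_derivative z'' l x) (at x)"
    and distinct: "\<And>j k x. j \<in> {1..n} \<Longrightarrow> k \<in> {1..n} \<Longrightarrow> j \<noteq> k \<Longrightarrow> x \<in> I \<Longrightarrow> z j x \<noteq> z k x"
begin

lemma Qpoly_derivatives_at_root:
  assumes l: "l \<in> {1..n}" and x0: "x0 \<in> I"
  defines "E \<equiv> complex_of_real ((1 + exp (-2 * x0)) ^ n)"
    and "E' \<equiv> complex_of_real (real n * (1 + exp (-2 * x0)) ^ (n - 1) * (-2 * exp (-2 * x0)))"
    and "R \<equiv> \<Prod>k\<in>{1..n} - {l}. z l x0 - z k x0"
  shows "Qpoly_dx n x0 (z l x0) = - E * z' l x0 * R"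
    and "Qpoly_dxx n x0 (z l x0) = - 2 * E' * z' l x0 * R
          - E * R * (z'' l x0 - (\<Sum>j\<in>{1..n} - {l}. 2 * z' l x0 * z' j x0 / (z l x0 - z j x0)))"
proof -
  define w where "w = z l x0"
  define p where "p x = (\<Prod>j\<in>{1..n}. w - z j x)" for x
  define Ef where "Ef x = complex_of_real ((1 + exp (-2 * x)) ^ n)" for x
  define E'f where "E'f x = complex_of_real (real n * (1 + exp (-2 * x)) ^ (n - 1) * (-2 * exp (-2 * x)))" for x
  obtain p' where p': "\<And>x. x \<in> I \<Longrightarrow> (p has_vector_derivative p' x) (at x)"
    and p'_x0: "p' x0 = - z' l x0 * R"
    and p'': "(p' has_vector_derivative
        - R * (z'' l x0 - (\<Sum>j\<in>{1..n} - {l}. 2 * z' l x0 * z' j x0 / (w - z j x0)))) (at x0)"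
    using prod_roots_derivatives_at_root[of "{1..n}" l I x0 z z' z''] l x0 open_I d1 d2 distinct
    unfolding p_def w_def R_def by blast
  have Ef: "(Ef has_vector_derivative E'f x) (at x)" for x
    unfolding Ef_def E'f_def by (rule has_vector_derivative_of_real) (auto intro!: derivative_eq_intros)
  have "\<exists>D. ((\<lambda>x. real n * (1 + exp (-2 * x)) ^ (n - 1) * (-2 * exp (-2 * x))) has_real_derivative D) (at x0)"
    by (rule exI) (rule derivative_eq_intros refl)+
  then have E'f: "E'f differentiable at x0"
    unfolding E'f_def using has_vector_derivative_of_real differentiableI_vector by blast
  have p_x0: "p x0 = 0"
    using l by (auto simp: p_def w_def)
  have Qpoly_dx_eq: "Qpoly_dx n x w = p x * E'f x + p' x * Ef x" if "x \<in> I" for x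
  proof -
    have "((\<lambda>x. Qpoly n x w) has_vector_derivative p x * E'f x + p' x * Ef x) (at x)"
      using has_vector_derivative_mult[OF p'[OF that] Ef]
      by (rule has_vector_derivative_transform_within_open[OF _ open_I that])
         (simp add: roots Ef_def p_def mult.commute)
    then show ?thesis
      using has_vector_derivative_Qpoly vector_derivative_unique_at by blast
  qed
  then show "Qpoly_dx n x0 (z l x0) = - E * z' l x0 * R"
    using x0 by (simp add: p_x0 p'_x0 w_def E_def Ef_def)
  have "((\<lambda>x. p x * E'f x + p' x * Ef x) has_vector_derivative
      - R * (z'' l x0 - (\<Sum>j\<in>{1..n} - {l}. 2 * z' l x0 * z' j x0 / (w - z j x0))) * Ef x0
        + 2 * p' x0 * E'f x0) (at x0)"
    using open_I x0 p_x0 p' p'' Ef E'f by (rule has_vector_derivative_mult_derivative_at_zero)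
  then have "((\<lambda>x. Qpoly_dx n x w) has_vector_derivative
      - R * (z'' l x0 - (\<Sum>j\<in>{1..n} - {l}. 2 * z' l x0 * z' j x0 / (w - z j x0))) * Ef x0
        + 2 * p' x0 * E'f x0) (at x0)"
    by (rule has_vector_derivative_transform_within_open[OF _ open_I x0]) (simp add: Qpoly_dx_eq)
  then have "Qpoly_dxx n x0 w = - R * (z'' l x0 - (\<Sum>j\<in>{1..n} - {l}. 2 * z' l x0 * z' j x0 / (w - z j x0))) * Ef x0
        + 2 * p' x0 * E'f x0"
    using has_vector_derivative_Qpoly_dx vector_derivative_unique_at by blast
  then show "Qpoly_dxx n x0 (z l x0) = - 2 * E' * z' l x0 * R
          - E * R * (z'' l x0 - (\<Sum>j\<in>{1..n} - {l}. 2 * z' l x0 * z' j x0 / (z l x0 - z j x0)))"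
    unfolding p'_x0 E_def E'_def Ef_def E'f_def w_def by (simp add: algebra_simps)
qed

lemma root_ode:
  assumes l: "l \<in> {1..n}" and x: "x \<in> I"
  shows "z'' l x + 2 * z l x * z' l x = (\<Sum>j\<in>{1..n} - {l}. 2 * z' l x * z' j x / (z l x - z j x))"
proof -
  define w where "w = z l x"
  define u where "u = complex_of_real (exp (-2 * x))"
  define E where "E = complex_of_real ((1 + exp (-2 * x)) ^ n)"
  define E' where "E' = complex_of_real (real n * (1 + exp (-2 * x)) ^ (n - 1) * (-2 * exp (-2 * x)))"
  define R where "R = (\<Prod>k\<in>{1..n} - {l}. w - z k x)"
  define S where "S = (\<Sum>j\<in>{1..n} - {l}. 2 * z' l x * z' j x / (w - z j x))"
  have "(\<Prod>j=1..n. w - z j x) = 0"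
    using l by (subst prod_zero_iff) (auto simp: w_def intro!: bexI[of _ l])
  then have "Qpoly n x w = 0"
    by (simp add: roots[OF x])
  then have ode: "(1 + u) * Qpoly_dxx n x w + 2 * (2 * of_nat n * u + w * (1 + u)) * Qpoly_dx n x w = 0"
    using Qpoly_x_ode[of x n w] by (simp add: u_def)
  have E': "(1 + u) * E' = - 2 * of_nat n * u * E"
  proof -
    obtain m where "n = Suc m"
      using n_pos by (cases n) auto
    then show ?thesis
      by (simp add: u_def E_def E'_def algebra_simps)
  qed
  have "(1 + u) * E * R * (z'' l x + 2 * w * z' l x - S) = 0"
    using ode Qpoly_derivatives_at_root[OF l x] E'
    unfolding E_def[symmetric] E'_def[symmetric] w_def[symmetric] R_def[symmetric] S_def[symmetric]
    by algebra
  moreover have "1 + u \<noteq> 0" "E \<noteq> 0"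
  proof -
    have pos: "1 + exp (-2 * x) > 0"
      by (simp add: add_pos_pos)
    moreover have "1 + u = complex_of_real (1 + exp (-2 * x))"
      by (simp add: u_def)
    ultimately show "1 + u \<noteq> 0"
      by (metis of_real_eq_0_iff less_irrefl)
    then show "E \<noteq> 0"
      by (simp add: E_def u_def)
  qed
  moreover have "R \<noteq> 0"
    using distinct l x by (auto simp: R_def w_def)
  ultimately show ?thesis
    by (simp add: w_def S_def)
qed

lemma roots_at_0:
  assumes I0: "0 \<in> I"
    and decreasing: "\<And>j k. j \<in> {1..n} \<Longrightarrow> k \<in> {1..n} \<Longrightarrow> j < k \<Longrightarrow> Re (z k 0) < Re (z j 0)"
    and l: "l \<in> {1..n}"
  shows "z l 0 = of_int (int n + 1 - 2 * int l)"
proof -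
  define c :: "nat \<Rightarrow> complex" where "c l = of_int (int n + 1 - 2 * int l)" for l
  have "\<exists>j. j \<in> {1..n} \<and> z j 0 = c l" if "l \<in> {1..n}" for l
  proof -
    have "(\<Prod>j=1..n. c l - z j 0) = 0"
      using roots[OF I0, of "c l"] Qpoly_0_vanishes[OF that] by (simp add: c_def)
    then obtain j where "j \<in> {1..n}" "c l - z j 0 = 0"
      by (auto simp: prod_zero_iff)
    then show ?thesis
      by auto
  qed
  then have "\<forall>l\<in>{1..n}. \<exists>j. j \<in> {1..n} \<and> z j 0 = c l"
    by blast
  from bchoice[OF this] obtain \<sigma> where "\<forall>l\<in>{1..n}. \<sigma> l \<in> {1..n} \<and> z (\<sigma> l) 0 = c l" ..
  then have \<sigma>: "\<sigma> l \<in> {1..n}" "z (\<sigma> l) 0 = c l" if "l \<in> {1..n}" for l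
    using that by auto
  have "strict_mono_on {1..n} \<sigma>"
  proof (rule strict_mono_onI)
    fix l l' assume l: "l \<in> {1..n}" and l': "l' \<in> {1..n}" and "l < l'"
    then have "Re (c l') < Re (c l)"
      by (simp add: c_def)
    moreover have "Re (c l) \<le> Re (c l')" if "\<sigma> l' \<le> \<sigma> l"
      using that decreasing[of "\<sigma> l'" "\<sigma> l"] \<sigma>[OF l] \<sigma>[OF l']
      by (cases "\<sigma> l' = \<sigma> l") auto
    ultimately show "\<sigma> l < \<sigma> l'"
      by (meson not_le order.asym)
  qed
  then have "\<sigma> l = l"
    using \<sigma> l by (intro strict_mono_on_self_map_fixes[of n]) auto
  then show ?thesis
    using \<sigma>[OF l] by (simp add: c_def)
qed

lemma root_slope_at_0:
  assumes I0: "0 \<in> I"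
    and decreasing: "\<And>j k. j \<in> {1..n} \<Longrightarrow> k \<in> {1..n} \<Longrightarrow> j < k \<Longrightarrow> Re (z k 0) < Re (z j 0)"
    and l: "l \<in> {1..n}"
  shows "z' l 0 = of_int ((2 * int l - 1) * (\<Prod>k\<in>{1..n}. 2 * (int k - int l) + 1))
                / of_int (\<Prod>k\<in>{1..n} - {l}. 2 * (int k - int l))"
proof -
  have z0: "z k 0 = of_int (int n + 1 - 2 * int k)" if "k \<in> {1..n}" for k
    using roots_at_0[OF I0 decreasing that] .
  define w where "w = z l 0"
  define D where "D = (\<Prod>k\<in>{1..n} - {l}. 2 * (int k - int l))"
  define P where "P = (\<Prod>k\<in>{1..n}. 2 * (int k - int l) + 1)"
  have w_minus_n: "w - of_nat n = - of_int (2 * int l - 1)"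
    using z0[OF l] by (simp add: w_def)
  have "(\<Prod>j=1..n. w - z j 0) = 0"
    using l by (subst prod_zero_iff) (auto simp: w_def intro!: bexI[of _ l])
  then have Q_w: "Qpoly n 0 w = 0"
    by (simp add: roots[OF I0])
  have "(\<Prod>j=1..n. w + 1 - z j 0) = of_int P"
    unfolding P_def of_int_prod using l z0 by (intro prod.cong) (auto simp: w_def)
  then have Q_w1: "Qpoly n 0 (w + 1) = 2 ^ n * of_int P"
    by (simp add: roots[OF I0])
  have "(\<Prod>k\<in>{1..n} - {l}. w - z k 0) = of_int D"
    unfolding D_def of_int_prod using l z0 by (intro prod.cong) (auto simp: w_def)
  then have "- (2 ^ n * (z' l 0 * of_int D)) = Qpoly_dx n 0 w"
    using Qpoly_derivatives_at_root(1)[OF l I0] by (simp add: w_def)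
  also have "\<dots> = - (2 ^ n * of_int ((2 * int l - 1) * P))"
    unfolding Qpoly_dx_0 Q_w Q_w1 w_minus_n by (simp add: algebra_simps)
  finally have "z' l 0 * of_int D = of_int ((2 * int l - 1) * P)"
    by simp
  moreover have "D \<noteq> 0"
    by (simp add: D_def)
  ultimately have "z' l 0 = of_int ((2 * int l - 1) * P) / of_int D"
    by (simp add: field_simps)
  then show ?thesis
    by (simp only: D_def P_def)
qed

end

theorem mainTheorem3:
  fixes n :: nat and I :: "real set"
    and z z' z'' :: "nat \<Rightarrow> real \<Rightarrow> complex"
  assumes n: "n \<ge> 1"
    and I: "open I" "connected I" "0 \<in> I"
    and roots: "\<And>x w. x \<in> I \<Longrightarrow>
        Qpoly n x w = complex_of_real ((1 + exp (-2*x)) ^ n) * (\<Prod>j=1..n. w - z j x)"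
    and d1: "\<And>l x. l \<in> {1..n} \<Longrightarrow> x \<in> I \<Longrightarrow> (z l has_vector_derivative z' l x) (at x)"
    and d2: "\<And>l x. l \<in> {1..n} \<Longrightarrow> x \<in> I \<Longrightarrow> (z' l has_vector_derivative z'' l x) (at x)"
    and distinct: "\<And>j k x. j \<in> {1..n} \<Longrightarrow> k \<in> {1..n} \<Longrightarrow> j \<noteq> k \<Longrightarrow> x \<in> I \<Longrightarrow> z j x \<noteq> z k x"
    and ordered: "\<exists>e>0. \<forall>x. \<bar>x\<bar> < e \<longrightarrow>
        (\<forall>j\<in>{1..n}. z j x \<in> \<real>) \<and>
        (\<forall>j\<in>{1..n}. \<forall>k\<in>{1..n}. j < k \<longrightarrow> Re (z k x) < Re (z j x))"
  shows "(\<forall>l\<in>{1..n}. \<forall>x\<in>I.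
            z'' l x + 2 * z l x * z' l x
              = (\<Sum>j\<in>{1..n} - {l}. 2 * z' l x * z' j x / (z l x - z j x)))
       \<and> (\<forall>l\<in>{1..n}. z l 0 = of_int (int n + 1 - 2 * int l))
       \<and> (\<forall>l\<in>{1..n}. z' l 0 = of_int (slope_num n l) / of_int (slope_den n l))"
proof -
  interpret Qpoly_root_curves n I z z' z''
    using n I(1) roots d1 d2 distinct by unfold_locales
  have decreasing: "\<And>j k. j \<in> {1..n} \<Longrightarrow> k \<in> {1..n} \<Longrightarrow> j < k \<Longrightarrow> Re (z k 0) < Re (z j 0)"
    using ordered by force
  show ?thesis
    using root_ode roots_at_0[OF I(3) decreasing] root_slope_at_0[OF I(3) decreasing]
      slope_quotient[where 'a=complex]
    by simp
qed

end
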